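(* Let $\alpha,\beta\ge0$ with $b=\alpha+\beta\le n$, and let $\mathbf{s}=(s_1,\dots,s_k)$ be a switch pattern. Then $$f_{\alpha,\beta,\mathbf{s}}=\frac1{2^b}\sum_{j=0}^b\binom bj a_{\alpha,\beta}(j)\lambda_{n,j,\mathbf{s}},$$ where $a_{\alpha,0}(j)=1$ for all $\alpha\ge0$ and all $j$, and $$a_{\alpha,\beta}(j)=\frac{b-j}{b}a_{\alpha,\beta-1}(j)-\frac jb a_{\alpha,\beta-1}(j-1)\quad\text{for all }\alpha\ge0,\ \beta\ge1.$$
   Context: Lightbulb process on $n$ bulbs with $k$ stages and switch pattern $\mathbf{s}=(s_1,\dots,s_k)$: the initial (stage $0$) status $X_{0j}\in\{0,1\}$ of each bulb is given deterministically; at stage $r$ a uniformly random subset of exactly $s_r$ bulbs is toggled, independently across stages; $X_{rj}=1$ iff bulb $j$ is toggled at stage $r$, and $X_j=(\sum_{r=0}^kX_{rj})\bmod2$ is the indicator that bulb $j$ is on at the terminal time. Define $f_{\alpha,\beta,\mathbf{s}}=P(X_i=0,\ i=1,\dots,\alpha+\beta\mid X_{0i}=0,\ i=1,\dots,\alpha;\ X_{0i}=1,\ i=\alpha+1,\dots,\alpha+\beta)$. With $(n)_t=n(n-1)\cdots(n-t+1)$, $\lambda_{n,j,s}=\sum_{t=0}^j\binom jt(-2)^t\frac{(s)_t}{(n)_t}$ and $\lambda_{n,j,\mathbf{s}}=\prod_{r=1}^k\lambda_{n,j,s_r}$ (empty product $1$). In the recursion, values $a(-1)$ and $a(b)$ only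 appear multiplied by zero. *)

theory Defs
  imports "HOL-Probability.Probability"
begin

text \<open>An outcome of the k toggling stages is a list Ss of length k whose r-th entry
  is the set of bulbs toggled at stage r+1 (a subset of {1..n} of size s!r).
  Independent uniform choices at each stage = uniform distribution on all such lists.\<close>

definition stage_outcomes :: "nat \<Rightarrow> nat list \<Rightarrow> nat set list set" where
  "stage_outcomes n s = {Ss. length Ss = length s \<and>
      (\<forall>r<length s. Ss ! r \<subseteq> {1..n} \<and> card (Ss ! r) = s ! r)}"

definition stage_pmf :: "nat \<Rightarrow> nat list \<Rightarrow> nat set list pmf" where
  "stage_pmf n s = pmf_of_set (stage_outcomes n s)"

definition terminal_status :: "(nat \<Rightarrow> nat) \<Rightarrow> nat set list \<Rightarrow> nat \<Rightarrow> nat" where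
  "terminal_status x0 Ss j = (x0 j + card {r. r < length Ss \<and> j \<in> Ss ! r}) mod 2"

text \<open>Initial statuses: bulbs 1..alpha off, bulbs alpha+1..alpha+beta on
  (the remaining bulbs are irrelevant to the event; set them off).\<close>
definition init_status :: "nat \<Rightarrow> nat \<Rightarrow> nat \<Rightarrow> nat" where
  "init_status \<alpha> \<beta> j = (if \<alpha> < j \<and> j \<le> \<alpha> + \<beta> then 1 else 0)"

definition f_prob :: "nat \<Rightarrow> nat \<Rightarrow> nat \<Rightarrow> nat list \<Rightarrow> real" where
  "f_prob n \<alpha> \<beta> s = measure_pmf.prob (stage_pmf n s)
     {Ss. \<forall>i\<in>{1..\<alpha>+\<beta>}. terminal_status (init_status \<alpha> \<beta>) Ss i = 0}"

definition falling :: "nat \<Rightarrow> nat \<Rightarrow> real" where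
  "falling n t = (\<Prod>i<t. real n - real i)"

definition lam1 :: "nat \<Rightarrow> nat \<Rightarrow> nat \<Rightarrow> real" where
  "lam1 n j s = (\<Sum>t=0..j. real (j choose t) * (-2) ^ t * falling s t / falling n t)"

definition lam :: "nat \<Rightarrow> nat \<Rightarrow> nat list \<Rightarrow> real" where
  "lam n j s = (\<Prod>r<length s. lam1 n j (s ! r))"

text \<open>a_{alpha,beta}(j); for j = 0 the term a(j-1) is multiplied by j/b = 0.\<close>
fun a_coef :: "nat \<Rightarrow> nat \<Rightarrow> nat \<Rightarrow> real" where
  "a_coef \<alpha> 0 j = 1"
| "a_coef \<alpha> (Suc \<beta>) j =
     (real (\<alpha> + Suc \<beta>) - real j) / real (\<alpha> + Suc \<beta>) * a_coef \<alpha> \<beta> j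
     - real j / real (\<alpha> + Suc \<beta>) * a_coef \<alpha> \<beta> (j - 1)"

end

theory Submission
  imports Defs
begin

text \<open>All bulbs 1..b end up off iff every x_i (initial status plus number of toggles of bulb i)
  is even, and the indicator of this event is the parity average
  2^-b * \<Sum>_{A \<subseteq> [b]} (-1)^(\<Sum>_{i \<in> A} x_i). The sign of A factors into (-1)^|A \<inter> B|,
  with B the initially lit bulbs, times one factor (-1)^|A \<inter> S_r| per stage. The stages are
  independent, and for a uniform s-subset S of [n] the expansion
  (-1)^|A \<inter> S| = \<Sum>_{T \<subseteq> A \<inter> S} (-2)^|T| together with P(T \<subseteq> S) = (s)_t / (n)_t shows that
  (-1)^|A \<inter> S| has mean \<lambda>_{n,|A|,s}. Finally, \<Sum>_A (-1)^|A \<inter> B| h(|A|) depends only on how many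
  bulbs are lit, and adding one more lit bulb splits the sets A by whether they contain it, which
  is exactly the recursion defining C(b,j) a_{\<alpha>,\<beta>}(j).\<close>

lemma falling_eq_fact_binomial: "falling n t = fact t * real (n choose t)"
  by (simp add: falling_def binomial_gbinomial gbinomial_prod_rev atLeast0LessThan)

lemma sum_Pow_card:
  fixes h :: "nat \<Rightarrow> 'a::comm_semiring_1"
  assumes "finite A"
  shows "(\<Sum>T\<in>Pow A. h (card T)) = (\<Sum>t=0..card A. of_nat (card A choose t) * h t)"
proof -
  have "(\<Sum>T\<in>Pow A. h (card T)) = (\<Sum>t=0..card A. \<Sum>T\<in>{T\<in>Pow A. card T = t}. h (card T))"
    by (rule sum.group[symmetric]) (use assms card_mono in auto)
  also have "\<dots> = (\<Sum>t=0..card A. of_nat (card A choose t) * h t)"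
  proof (rule sum.cong)
    fix t
    have "{T\<in>Pow A. card T = t} = {T. T \<subseteq> A \<and> card T = t}" by auto
    then show "(\<Sum>T\<in>{T\<in>Pow A. card T = t}. h (card T)) = of_nat (card A choose t) * h t"
      by (simp add: n_subsets assms)
  qed simp
  finally show ?thesis .
qed

lemma sum_Pow_power_card:
  fixes x :: "'a::comm_semiring_1"
  assumes "finite C"
  shows "(\<Sum>T\<in>Pow C. x ^ card T) = (x + 1) ^ card C"
  using prod_add[OF assms, of "\<lambda>_. x" "\<lambda>_. 1"] by simp

lemma sum_Pow_insert:
  assumes "finite A" and "x \<notin> A"
  shows "(\<Sum>B\<in>Pow (insert x A). g B) = (\<Sum>B\<in>Pow A. g B + g (insert x B))"
proof -
  have "inj_on (insert x) (Pow A)"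
    using assms(2) by (auto simp: inj_on_def)
  moreover have "Pow A \<inter> insert x ` Pow A = {}"
    using assms(2) by auto
  ultimately show ?thesis
    using assms(1) by (simp add: Pow_insert sum.union_disjoint sum.reindex sum.distrib)
qed

lemma of_bool_all_even:
  assumes "finite I"
  shows "(of_bool (\<forall>i\<in>I. even (x i)) :: real) = (\<Sum>A\<in>Pow I. (-1) ^ (\<Sum>i\<in>A. x i)) / 2 ^ card I"
proof -
  have "(of_bool (\<forall>i\<in>I. even (x i)) :: real) = (\<Prod>i\<in>I. of_bool (even (x i)))"
    using assms by (induction I rule: finite_induct) auto
  also have "\<dots> = (\<Prod>i\<in>I. ((-1) ^ x i + 1) / 2)"
    by (rule prod.cong) auto
  also have "\<dots> = (\<Sum>A\<in>Pow I. (\<Prod>i\<in>A. (-1) ^ x i)) / 2 ^ card I"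
    by (simp add: prod_dividef prod_add[OF assms])
  finally show ?thesis by (simp add: power_sum)
qed

definition subsets_of_card :: "'a set \<Rightarrow> nat \<Rightarrow> 'a set set" where
  "subsets_of_card X m = {S. S \<subseteq> X \<and> card S = m}"

lemma finite_subsets_of_card: "finite X \<Longrightarrow> finite (subsets_of_card X m)"
  unfolding subsets_of_card_def by (rule finite_subset[of _ "Pow X"]) auto

lemma card_subsets_of_card: "finite X \<Longrightarrow> card (subsets_of_card X m) = card X choose m"
  unfolding subsets_of_card_def by (rule n_subsets)

lemma card_supersets_in_subsets_of_card:
  assumes "finite X" and "T \<subseteq> X"
  shows "card {S\<in>subsets_of_card X m. T \<subseteq> S} * (card X choose card T) = (card X choose m) * (m choose card T)"
proof (cases "card T \<le> m \<and> m \<le> card X")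
  case True
  have fT: "finite T" using assms finite_subset by blast
  have "bij_betw (\<lambda>S. S - T) {S\<in>subsets_of_card X m. T \<subseteq> S} (subsets_of_card (X - T) (m - card T))"
  proof (rule bij_betw_byWitness[where f' = "\<lambda>Y. Y \<union> T"])
    show "(\<lambda>Y. Y \<union> T) ` subsets_of_card (X - T) (m - card T) \<subseteq> {S\<in>subsets_of_card X m. T \<subseteq> S}"
    proof (intro image_subsetI)
      fix Y assume Y: "Y \<in> subsets_of_card (X - T) (m - card T)"
      then have "finite Y" and "Y \<inter> T = {}"
        using finite_subset[of Y X] assms by (auto simp: subsets_of_card_def)
      then have "card (Y \<union> T) = m"
        using Y True fT by (simp add: card_Un_disjoint subsets_of_card_def)
      then show "Y \<union> T \<in> {S\<in>subsets_of_card X m. T \<subseteq> S}"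
        using Y assms by (auto simp: subsets_of_card_def)
    qed
  qed (use assms fT in \<open>auto simp: subsets_of_card_def card_Diff_subset\<close>)
  then have "card {S\<in>subsets_of_card X m. T \<subseteq> S} = (card X - card T) choose (m - card T)"
    using assms fT by (simp add: bij_betw_same_card card_subsets_of_card card_Diff_subset)
  then show ?thesis using choose_mult[of "card T" m "card X"] True by simp
next
  case False
  then consider "m < card T" | "card X < m" by linarith
  then show ?thesis
  proof cases
    case 1
    then have "{S\<in>subsets_of_card X m. T \<subseteq> S} = {}"
      using assms by (auto simp: subsets_of_card_def) (meson card_mono finite_subset leD)
    with 1 show ?thesis by (simp only: card.empty binomial_eq_0)
  next
    case 2
    then have "subsets_of_card X m = {}"
      using assms by (auto simp: subsets_of_card_def dest: card_mono[rotated])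
    then show ?thesis using 2 by simp
  qed
qed

lemma sum_subsets_of_card_sign:
  assumes "finite X" and "A \<subseteq> X"
  shows "(\<Sum>S\<in>subsets_of_card X m. (-1::real) ^ card (A \<inter> S)) = real (card X choose m) * lam1 (card X) (card A) m"
proof -
  have fA: "finite A" using assms finite_subset by blast
  have "(\<Sum>S\<in>subsets_of_card X m. (-1::real) ^ card (A \<inter> S))
      = (\<Sum>S\<in>subsets_of_card X m. \<Sum>T\<in>{T\<in>Pow A. T \<subseteq> S}. (-2) ^ card T)"
  proof (rule sum.cong)
    fix S
    have "{T\<in>Pow A. T \<subseteq> S} = Pow (A \<inter> S)" by auto
    then show "(-1::real) ^ card (A \<inter> S) = (\<Sum>T\<in>{T\<in>Pow A. T \<subseteq> S}. (-2) ^ card T)"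
      using sum_Pow_power_card[of "A \<inter> S" "-2::real"] fA by simp
  qed simp
  also have "\<dots> = (\<Sum>T\<in>Pow A. (-2) ^ card T * real (card {S\<in>subsets_of_card X m. T \<subseteq> S}))"
    using assms fA by (subst sum.swap_restrict) (simp_all add: finite_subsets_of_card mult.commute)
  also have "\<dots> = (\<Sum>T\<in>Pow A. (-2) ^ card T * (real (card X choose m) * falling m (card T) / falling (card X) (card T)))"
  proof (rule sum.cong)
    fix T assume "T \<in> Pow A"
    then have T: "T \<subseteq> X" and "card T \<le> card X"
      using assms by (auto intro: card_mono)
    then have "real (card X choose card T) \<noteq> 0" by simp
    then show "(-2) ^ card T * real (card {S\<in>subsets_of_card X m. T \<subseteq> S})
        = (-2) ^ card T * (real (card X choose m) * falling m (card T) / falling (card X) (card T))"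
      using card_supersets_in_subsets_of_card[OF assms(1) T, of m]
      by (simp add: falling_eq_fact_binomial field_simps flip: of_nat_mult)
  qed simp
  also have "\<dots> = real (card X choose m) * lam1 (card X) (card A) m"
    using sum_Pow_card[OF fA, of "\<lambda>t. (-2) ^ t * (real (card X choose m) * falling m t / falling (card X) t)"]
    by (simp add: lam1_def sum_distrib_left algebra_simps)
  finally show ?thesis .
qed

lemma binomial_a_coef_Suc:
  "real ((\<alpha> + Suc \<beta>) choose j) * a_coef \<alpha> (Suc \<beta>) j =
     real ((\<alpha> + \<beta>) choose j) * a_coef \<alpha> \<beta> j
     - (if j = 0 then 0 else real ((\<alpha> + \<beta>) choose (j - 1)) * a_coef \<alpha> \<beta> (j - 1))"
proof -
  define b where "b = \<alpha> + Suc \<beta>"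
  have b_pos: "real b > 0" and b_pred: "b - 1 = \<alpha> + \<beta>"
    unfolding b_def by simp_all
  have stay: "real (b choose j) * ((real b - real j) / real b) = real ((\<alpha> + \<beta>) choose j)"
  proof (cases "j \<le> b")
    case True
    have "(b - j) * (b choose j) = b * ((b - 1) choose j)"
      by (rule binomial_absorb_comp)
    with True have "(real b - real j) * real (b choose j) = real b * real ((b - 1) choose j)"
      by (metis of_nat_diff of_nat_mult)
    with b_pos b_pred show ?thesis
      by (simp add: field_simps)
  next
    case False
    with b_pred show ?thesis
      by (simp add: binomial_eq_0)
  qed
  have step: "real (b choose j) * (real j / real b) = real ((\<alpha> + \<beta>) choose (j - 1))" if "j \<noteq> 0"
  proof -
    obtain k where k: "j = Suc k"
      using \<open>j \<noteq> 0\<close> by (cases j) auto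
    have "real (Suc k) * real (b choose Suc k) = real b * real ((b - 1) choose k)"
      by (metis binomial_absorption of_nat_mult)
    with b_pos b_pred k show ?thesis
      by (simp add: field_simps)
  qed
  have "real (b choose j) * a_coef \<alpha> (Suc \<beta>) j =
      real (b choose j) * ((real b - real j) / real b) * a_coef \<alpha> \<beta> j
      - real (b choose j) * (real j / real b) * a_coef \<alpha> \<beta> (j - 1)"
    by (simp add: b_def algebra_simps)
  also have "\<dots> = real ((\<alpha> + \<beta>) choose j) * a_coef \<alpha> \<beta> j
      - (if j = 0 then 0 else real ((\<alpha> + \<beta>) choose (j - 1)) * a_coef \<alpha> \<beta> (j - 1))"
    using stay step by (cases "j = 0") simp_all
  finally show ?thesis
    by (simp only: b_def)
qed

lemma sum_binomial_a_coef_Suc: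
  "(\<Sum>j=0..\<alpha> + Suc \<beta>. real ((\<alpha> + Suc \<beta>) choose j) * a_coef \<alpha> (Suc \<beta>) j * h j)
    = (\<Sum>j=0..\<alpha> + \<beta>. real ((\<alpha> + \<beta>) choose j) * a_coef \<alpha> \<beta> j * (h j - h (Suc j)))"
proof -
  define c where "c j = real ((\<alpha> + \<beta>) choose j) * a_coef \<alpha> \<beta> j" for j
  have "(\<Sum>j=0..\<alpha> + Suc \<beta>. real ((\<alpha> + Suc \<beta>) choose j) * a_coef \<alpha> (Suc \<beta>) j * h j)
      = (\<Sum>j=0..\<alpha> + Suc \<beta>. c j * h j - (if j = 0 then 0 else c (j - 1)) * h j)"
    by (rule sum.cong) (simp_all only: binomial_a_coef_Suc c_def left_diff_distrib)
  also have "\<dots> = (\<Sum>j=0..Suc (\<alpha> + \<beta>). c j * h j) - (\<Sum>j=0..Suc (\<alpha> + \<beta>). (if j = 0 then 0 else c (j - 1)) * h j)"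
    by (simp add: sum_subtractf del: sum.cl_ivl_Suc)
  also have "(\<Sum>j=0..Suc (\<alpha> + \<beta>). c j * h j) = (\<Sum>j=0..\<alpha> + \<beta>. c j * h j)"
    by (simp add: c_def)
  also have "(\<Sum>j=0..Suc (\<alpha> + \<beta>). (if j = 0 then 0 else c (j - 1)) * h j) = (\<Sum>j=0..\<alpha> + \<beta>. c j * h (Suc j))"
    by (simp add: sum.atLeast0_atMost_Suc_shift del: sum.cl_ivl_Suc)
  finally show ?thesis
    by (simp add: c_def sum_subtractf right_diff_distrib)
qed

lemma sum_Pow_sign_card:
  fixes h :: "nat \<Rightarrow> real"
  assumes "finite P" and "finite Q" and "P \<inter> Q = {}"
  shows "(\<Sum>A\<in>Pow (P \<union> Q). (-1) ^ card (A \<inter> Q) * h (card A))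
    = (\<Sum>j=0..card P + card Q. real ((card P + card Q) choose j) * a_coef (card P) (card Q) j * h j)"
  using assms(2,3)
proof (induction Q arbitrary: h rule: finite_induct)
  case empty
  then show ?case
    using sum_Pow_card[OF assms(1), of h] by simp
next
  case (insert x Q)
  have fPQ: "finite (P \<union> Q)" and x: "x \<notin> P \<union> Q" and disj: "P \<inter> Q = {}"
    using assms(1) insert by auto
  have "P \<union> insert x Q = insert x (P \<union> Q)"
    by auto
  then have "(\<Sum>A\<in>Pow (P \<union> insert x Q). (-1) ^ card (A \<inter> insert x Q) * h (card A))
      = (\<Sum>A\<in>Pow (P \<union> Q). (-1) ^ card (A \<inter> insert x Q) * h (card A)
          + (-1) ^ card (insert x A \<inter> insert x Q) * h (card (insert x A)))"
    by (simp only: sum_Pow_insert[OF fPQ x])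
  also have "\<dots> = (\<Sum>A\<in>Pow (P \<union> Q). (-1) ^ card (A \<inter> Q) * (h (card A) - h (Suc (card A))))"
  proof (rule sum.cong)
    fix A assume A: "A \<in> Pow (P \<union> Q)"
    then have "A \<inter> insert x Q = A \<inter> Q" and "insert x A \<inter> insert x Q = insert x (A \<inter> Q)"
      and "finite A" and "x \<notin> A"
      using x fPQ finite_subset by auto
    then show "(-1) ^ card (A \<inter> insert x Q) * h (card A)
        + (-1) ^ card (insert x A \<inter> insert x Q) * h (card (insert x A))
        = (-1) ^ card (A \<inter> Q) * (h (card A) - h (Suc (card A)))"
      by (simp add: algebra_simps)
  qed simp
  also have "\<dots> = (\<Sum>j=0..card P + card Q. real ((card P + card Q) choose j)
      * a_coef (card P) (card Q) j * (h j - h (Suc j)))"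
    using insert.IH[OF disj, of "\<lambda>j. h j - h (Suc j)"] by simp
  also have "\<dots> = (\<Sum>j=0..card P + Suc (card Q). real ((card P + Suc (card Q)) choose j)
      * a_coef (card P) (Suc (card Q)) j * h j)"
    by (rule sum_binomial_a_coef_Suc[symmetric])
  finally show ?case
    using insert.hyps by simp
qed

lemma stage_outcomes_Nil: "stage_outcomes n [] = {[]}"
  by (auto simp: stage_outcomes_def)

lemma stage_outcomes_Cons:
  "stage_outcomes n (m # s) = (\<lambda>(S, Ss). S # Ss) ` (subsets_of_card {1..n} m \<times> stage_outcomes n s)"
proof (intro set_eqI iffI)
  fix Ss assume Ss: "Ss \<in> stage_outcomes n (m # s)"
  then obtain S Ss' where Ss_eq: "Ss = S # Ss'"
    by (cases Ss) (auto simp: stage_outcomes_def)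
  have "S \<in> subsets_of_card {1..n} m"
    using Ss unfolding Ss_eq stage_outcomes_def subsets_of_card_def by force
  moreover have "Ss' \<in> stage_outcomes n s"
    using Ss unfolding Ss_eq stage_outcomes_def by force
  ultimately show "Ss \<in> (\<lambda>(S, Ss). S # Ss) ` (subsets_of_card {1..n} m \<times> stage_outcomes n s)"
    unfolding Ss_eq by blast
next
  fix Ss assume "Ss \<in> (\<lambda>(S, Ss). S # Ss) ` (subsets_of_card {1..n} m \<times> stage_outcomes n s)"
  then obtain S Ss' where "Ss = S # Ss'" "S \<in> subsets_of_card {1..n} m" "Ss' \<in> stage_outcomes n s"
    by auto
  then show "Ss \<in> stage_outcomes n (m # s)"
    by (fastforce simp: stage_outcomes_def subsets_of_card_def less_Suc_eq_0_disj)
qed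

lemma sum_stage_outcomes_prod:
  "(\<Sum>Ss\<in>stage_outcomes n s. \<Prod>r<length s. G r (Ss ! r)) =
   (\<Prod>r<length s. \<Sum>S\<in>subsets_of_card {1..n} (s ! r). (G r S :: real))"
proof (induction s arbitrary: G)
  case Nil
  then show ?case by (simp add: stage_outcomes_Nil)
next
  case (Cons m s)
  have inj: "inj_on (\<lambda>(S, Ss). S # Ss) (subsets_of_card {1..n} m \<times> stage_outcomes n s)"
    by (auto simp: inj_on_def)
  have "(\<Sum>Ss\<in>stage_outcomes n (m # s). \<Prod>r<length (m # s). G r (Ss ! r))
      = (\<Sum>S\<in>subsets_of_card {1..n} m. \<Sum>Ss\<in>stage_outcomes n s. G 0 S * (\<Prod>r<length s. G (Suc r) (Ss ! r)))"
    unfolding stage_outcomes_Cons sum.reindex[OF inj] sum.cartesian_product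
    by (simp add: case_prod_beta prod.lessThan_Suc_shift del: prod.lessThan_Suc)
  also have "\<dots> = (\<Sum>S\<in>subsets_of_card {1..n} m. G 0 S) * (\<Prod>r<length s. \<Sum>S\<in>subsets_of_card {1..n} (s ! r). G (Suc r) S)"
    by (simp only: sum_product Cons.IH[of "\<lambda>r. G (Suc r)", symmetric])
  finally show ?case
    by (simp add: prod.lessThan_Suc_shift del: prod.lessThan_Suc)
qed

lemma card_stage_outcomes: "card (stage_outcomes n s) = (\<Prod>r<length s. n choose s ! r)"
  using sum_stage_outcomes_prod[where n = n and s = s and G = "\<lambda>_ _. 1"]
  by (simp add: card_subsets_of_card flip: of_nat_prod)

lemma sum_stage_outcomes_sign:
  assumes "A \<subseteq> {1..n}"
  shows "(\<Sum>Ss\<in>stage_outcomes n s. \<Prod>r<length s. (-1::real) ^ card (A \<inter> Ss ! r))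
    = real (card (stage_outcomes n s)) * lam n (card A) s"
  using sum_stage_outcomes_prod[where n = n and s = s and G = "\<lambda>_ S. (-1::real) ^ card (A \<inter> S)"]
    sum_subsets_of_card_sign[of "{1..n}" A] assms
  by (simp add: card_stage_outcomes lam_def prod.distrib)

lemma sum_card_occurrences:
  assumes "finite A"
  shows "(\<Sum>i\<in>A. card {r. r < length Ss \<and> i \<in> Ss ! r}) = (\<Sum>r<length Ss. card (A \<inter> Ss ! r))"
proof -
  have "(\<Sum>i\<in>A. card {r. r < length Ss \<and> i \<in> Ss ! r}) = (\<Sum>i\<in>A. \<Sum>r<length Ss. of_bool (i \<in> Ss ! r))"
    by (simp add: Int_def)
  also have "\<dots> = (\<Sum>r<length Ss. \<Sum>i\<in>A. of_bool (i \<in> Ss ! r))"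
    by (rule sum.swap)
  also have "\<dots> = (\<Sum>r<length Ss. card (A \<inter> Ss ! r))"
    using assms by (simp add: Int_def)
  finally show ?thesis .
qed

lemma sum_init_status:
  assumes "finite A"
  shows "(\<Sum>i\<in>A. init_status \<alpha> \<beta> i) = card (A \<inter> {\<alpha><..\<alpha>+\<beta>})"
  using assms by (simp add: init_status_def of_bool_def[symmetric] Int_def)

lemma of_bool_terminal_all_off:
  "(of_bool (\<forall>i\<in>{1..\<alpha>+\<beta>}. terminal_status (init_status \<alpha> \<beta>) Ss i = 0) :: real)
    = (\<Sum>A\<in>Pow {1..\<alpha>+\<beta>}. (-1) ^ card (A \<inter> {\<alpha><..\<alpha>+\<beta>}) * (\<Prod>r<length Ss. (-1) ^ card (A \<inter> Ss ! r))) / 2 ^ (\<alpha>+\<beta>)"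
proof -
  define x where "x i = init_status \<alpha> \<beta> i + card {r. r < length Ss \<and> i \<in> Ss ! r}" for i
  have "terminal_status (init_status \<alpha> \<beta>) Ss i = 0 \<longleftrightarrow> even (x i)" for i
    by (simp add: terminal_status_def x_def even_iff_mod_2_eq_zero)
  moreover have "(-1::real) ^ (\<Sum>i\<in>A. x i)
      = (-1) ^ card (A \<inter> {\<alpha><..\<alpha>+\<beta>}) * (\<Prod>r<length Ss. (-1) ^ card (A \<inter> Ss ! r))"
    if "A \<in> Pow {1..\<alpha>+\<beta>}" for A
    using that finite_subset[of A "{1..\<alpha>+\<beta>}"]
    by (simp add: x_def sum.distrib sum_init_status sum_card_occurrences power_add power_sum)
  ultimately show ?thesis
    using of_bool_all_even[of "{1..\<alpha>+\<beta>}" x] by simp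
qed

lemma f_prob_eq_sum_Pow_sign:
  assumes "\<alpha> + \<beta> \<le> n" and "\<forall>x\<in>set s. x \<le> n"
  shows "f_prob n \<alpha> \<beta> s
    = (\<Sum>A\<in>Pow {1..\<alpha>+\<beta>}. (-1) ^ card (A \<inter> {\<alpha><..\<alpha>+\<beta>}) * lam n (card A) s) / 2 ^ (\<alpha>+\<beta>)"
proof -
  let ?U = "stage_outcomes n s" and ?I = "{1..\<alpha>+\<beta>}" and ?B = "{\<alpha><..\<alpha>+\<beta>}"
  let ?sign = "\<lambda>A Ss. \<Prod>r<length s. (-1::real) ^ card (A \<inter> Ss ! r)"
  have "card ?U > 0"
    using assms(2) by (simp add: card_stage_outcomes prod_pos zero_less_binomial)
  then have U: "finite ?U" "?U \<noteq> {}"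
    by (simp_all add: card_gt_0_iff)
  have all_off: "of_bool (\<forall>i\<in>?I. terminal_status (init_status \<alpha> \<beta>) Ss i = 0)
      = (\<Sum>A\<in>Pow ?I. (-1) ^ card (A \<inter> ?B) * ?sign A Ss) / 2 ^ (\<alpha>+\<beta>)" if "Ss \<in> ?U" for Ss
    using that of_bool_terminal_all_off[of \<alpha> \<beta> Ss] by (simp add: stage_outcomes_def)
  have "f_prob n \<alpha> \<beta> s = (\<Sum>Ss\<in>?U. of_bool (\<forall>i\<in>?I. terminal_status (init_status \<alpha> \<beta>) Ss i = 0)) / card ?U"
    using U by (simp add: f_prob_def stage_pmf_def measure_pmf_of_set Int_def)
  also have "\<dots> = (\<Sum>Ss\<in>?U. \<Sum>A\<in>Pow ?I. (-1) ^ card (A \<inter> ?B) * ?sign A Ss) / 2 ^ (\<alpha>+\<beta>) / card ?U"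
    using all_off by (simp add: sum_divide_distrib cong: sum.cong)
  also have "\<dots> = (\<Sum>A\<in>Pow ?I. (-1) ^ card (A \<inter> ?B) * (\<Sum>Ss\<in>?U. ?sign A Ss)) / 2 ^ (\<alpha>+\<beta>) / card ?U"
    by (simp add: sum_distrib_left sum.swap[of _ ?U])
  also have "(\<Sum>A\<in>Pow ?I. (-1) ^ card (A \<inter> ?B) * (\<Sum>Ss\<in>?U. ?sign A Ss))
      = (\<Sum>A\<in>Pow ?I. (-1) ^ card (A \<inter> ?B) * (card ?U * lam n (card A) s))"
    by (intro sum.cong refl arg_cong2[where f = times] sum_stage_outcomes_sign) (use assms(1) in auto)
  also have "\<dots> = card ?U * (\<Sum>A\<in>Pow ?I. (-1) ^ card (A \<inter> ?B) * lam n (card A) s)"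
    by (simp add: sum_distrib_left mult.left_commute)
  finally show ?thesis
    using \<open>card ?U > 0\<close> by simp
qed

theorem lemma4p4:
  fixes n \<alpha> \<beta> :: nat and s :: "nat list"
  assumes "\<alpha> + \<beta> \<le> n"
    and "\<forall>x\<in>set s. x \<le> n"
  shows "f_prob n \<alpha> \<beta> s =
    1 / 2 ^ (\<alpha> + \<beta>) * (\<Sum>j=0..\<alpha>+\<beta>. real ((\<alpha> + \<beta>) choose j) * a_coef \<alpha> \<beta> j * lam n j s)"
proof -
  have "{1..\<alpha>} \<union> {\<alpha><..\<alpha>+\<beta>} = {1..\<alpha>+\<beta>}" and "{1..\<alpha>} \<inter> {\<alpha><..\<alpha>+\<beta>} = {}"
    by auto
  then show ?thesis
    using f_prob_eq_sum_Pow_sign[OF assms] sum_Pow_sign_card[of "{1..\<alpha>}" "{\<alpha><..\<alpha>+\<beta>}" "\<lambda>j. lam n j s"]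
    by simp
qed

end
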